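(* $\mathbb{P}(\mathsf{FDqRA})=\mathsf{EDqRA}$ (up to isomorphism): every algebra in $\mathsf{EDqRA}$ is isomorphic to a direct product of algebras in $\mathsf{FDqRA}$, and every direct product of a family of algebras in $\mathsf{FDqRA}$ is isomorphic to an algebra in $\mathsf{EDqRA}$.
   Context: For binary relations: converse $R^\smile$; composition $R\circ S=\{(x,y)\mid\exists z\,((x,z)\in R,(z,y)\in S)\}$; functions are identified with their graphs. Order automorphism: bijection with $x\le y\iff\alpha(x)\le\alpha(y)$; dual order automorphism: bijection with $x\le y\iff\beta(y)\le\beta(x)$; self-inverse: $\beta\circ\beta=\mathrm{id}$. Let $(X,\le)$ be a poset, $E$ an equivalence relation on $X$ with ${\le}\subseteq E$, $\alpha$ an order automorphism and $\beta$ a self-inverse dual order automorphism of $(X,\le)$ with $\alpha,\beta\subseteq E$ and $\beta=\alpha\circ\beta\circ\alpha$. Order $E$ by $(u,v)\preceq(x,y)$ iff $x\le u$ and $v\le y$, write $\mathbf E=(E,\preceq)$, and let $R^c=E\setminus R$. Then $\mathbf{Dq}(\mathbf E)=\langle\mathsf{Up}(\mathbf E),\cap,\cup,\circ,1,0,{\sim},-,'\rangle$ is the algebra of up-sets of $\mathbf E$ with $1={\le}$, $0=\alpha\circ({\le}^c)^\smile$, ${\sim}R=(R^\smile\circ0^c)^c$, $-R=(0^c\circ R^\smile)^c$, $R'=\alpha\circ\beta\circ R^c\circ\beta$. $\mathsf{EDqRA}$ is the class of all such algebras $\mathbf{Dq}(\mathbf E)$ (equivalence distributive quasi relation algebras);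 $\mathsf{FDqRA}$ is the class of those with $E=X^2$ (full distributive quasi relation algebras). $\mathbb{P}(\mathsf K)$ denotes the class of direct products of families of members of $\mathsf K$. *)

theory Defs
  imports Main "HOL-Library.FuncSet"
begin

record 'c dq_alg =
  carrier :: "'c set"
  meet :: "'c \<Rightarrow> 'c \<Rightarrow> 'c"
  join :: "'c \<Rightarrow> 'c \<Rightarrow> 'c"
  comp :: "'c \<Rightarrow> 'c \<Rightarrow> 'c"
  one :: "'c"
  zero :: "'c"
  tilde :: "'c \<Rightarrow> 'c"
  minus :: "'c \<Rightarrow> 'c"
  prime :: "'c \<Rightarrow> 'c"

definition dq_iso :: "'c dq_alg \<Rightarrow> 'd dq_alg \<Rightarrow> ('c \<Rightarrow> 'd) \<Rightarrow> bool" where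
  "dq_iso A B h \<longleftrightarrow>
     bij_betw h (carrier A) (carrier B) \<and>
     (\<forall>x\<in>carrier A. \<forall>y\<in>carrier A.
        h (meet A x y) = meet B (h x) (h y) \<and>
        h (join A x y) = join B (h x) (h y) \<and>
        h (comp A x y) = comp B (h x) (h y)) \<and>
     h (one A) = one B \<and> h (zero A) = zero B \<and>
     (\<forall>x\<in>carrier A. h (tilde A x) = tilde B (h x) \<and>
        h (minus A x) = minus B (h x) \<and> h (prime A x) = prime B (h x))"

definition dq_isomorphic :: "'c dq_alg \<Rightarrow> 'd dq_alg \<Rightarrow> bool" where
  "dq_isomorphic A B \<longleftrightarrow> (\<exists>h. dq_iso A B h)"

definition dq_prod :: "'i set \<Rightarrow> ('i \<Rightarrow> 'c dq_alg) \<Rightarrow> ('i \<Rightarrow> 'c) dq_alg" where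
  "dq_prod I F =
    \<lparr> carrier = (\<Pi>\<^sub>E i\<in>I. carrier (F i)),
      meet = (\<lambda>f g. \<lambda>i\<in>I. meet (F i) (f i) (g i)),
      join = (\<lambda>f g. \<lambda>i\<in>I. join (F i) (f i) (g i)),
      comp = (\<lambda>f g. \<lambda>i\<in>I. comp (F i) (f i) (g i)),
      one = (\<lambda>i\<in>I. one (F i)),
      zero = (\<lambda>i\<in>I. zero (F i)),
      tilde = (\<lambda>f. \<lambda>i\<in>I. tilde (F i) (f i)),
      minus = (\<lambda>f. \<lambda>i\<in>I. minus (F i) (f i)),
      prime = (\<lambda>f. \<lambda>i\<in>I. prime (F i) (f i)) \<rparr>"

definition fgraph :: "'a set \<Rightarrow> ('a \<Rightarrow> 'a) \<Rightarrow> 'a rel" where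
  "fgraph X f = {(x, f x) | x. x \<in> X}"

definition order_automorphism :: "'a set \<Rightarrow> 'a rel \<Rightarrow> ('a \<Rightarrow> 'a) \<Rightarrow> bool" where
  "order_automorphism X le a \<longleftrightarrow> bij_betw a X X \<and>
     (\<forall>x\<in>X. \<forall>y\<in>X. (x, y) \<in> le \<longleftrightarrow> (a x, a y) \<in> le)"

definition dual_order_automorphism :: "'a set \<Rightarrow> 'a rel \<Rightarrow> ('a \<Rightarrow> 'a) \<Rightarrow> bool" where
  "dual_order_automorphism X le b \<longleftrightarrow> bij_betw b X X \<and>
     (\<forall>x\<in>X. \<forall>y\<in>X. (x, y) \<in> le \<longleftrightarrow> (b y, b x) \<in> le)"

definition dq_frame :: "'a set \<Rightarrow> 'a rel \<Rightarrow> 'a rel \<Rightarrow> ('a \<Rightarrow> 'a) \<Rightarrow> ('a \<Rightarrow> 'a) \<Rightarrow> bool" where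
  "dq_frame X le E a b \<longleftrightarrow>
     partial_order_on X le \<and>
     equiv X E \<and> le \<subseteq> E \<and>
     order_automorphism X le a \<and>
     dual_order_automorphism X le b \<and>
     fgraph X b O fgraph X b = Id_on X \<and>
     fgraph X a \<subseteq> E \<and> fgraph X b \<subseteq> E \<and>
     fgraph X b = fgraph X a O fgraph X b O fgraph X a"

definition E_below :: "'a rel \<Rightarrow> 'a \<times> 'a \<Rightarrow> 'a \<times> 'a \<Rightarrow> bool" where
  "E_below le p q \<longleftrightarrow> (fst q, fst p) \<in> le \<and> (snd p, snd q) \<in> le"

definition up_sets :: "'a rel \<Rightarrow> 'a rel \<Rightarrow> 'a rel set" where
  "up_sets le E = {R. R \<subseteq> E \<and> (\<forall>p\<in>R. \<forall>q\<in>E. E_below le p q \<longrightarrow> q \<in> R)}"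

definition Dq_zero :: "'a set \<Rightarrow> 'a rel \<Rightarrow> 'a rel \<Rightarrow> ('a \<Rightarrow> 'a) \<Rightarrow> 'a rel" where
  "Dq_zero X le E a = fgraph X a O (E - le)\<inverse>"

definition Dq :: "'a set \<Rightarrow> 'a rel \<Rightarrow> 'a rel \<Rightarrow> ('a \<Rightarrow> 'a) \<Rightarrow> ('a \<Rightarrow> 'a) \<Rightarrow> 'a rel dq_alg" where
  "Dq X le E a b =
    \<lparr> carrier = up_sets le E,
      meet = (\<inter>),
      join = (\<union>),
      comp = (\<lambda>R S. R O S),
      one = le,
      zero = Dq_zero X le E a,
      tilde = (\<lambda>R. E - (R\<inverse> O (E - Dq_zero X le E a))),
      minus = (\<lambda>R. E - ((E - Dq_zero X le E a) O R\<inverse>)),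
      prime = (\<lambda>R. fgraph X a O fgraph X b O (E - R) O fgraph X b) \<rparr>"

definition EDqRA :: "'a rel dq_alg \<Rightarrow> bool" where
  "EDqRA A \<longleftrightarrow> (\<exists>X le E a b. dq_frame X le E a b \<and> A = Dq X le E a b)"

definition FDqRA :: "'a rel dq_alg \<Rightarrow> bool" where
  "FDqRA A \<longleftrightarrow> (\<exists>X le a b. dq_frame X le (X \<times> X) a b \<and> A = Dq X le (X \<times> X) a b)"

end

theory Submission
  imports Defs
begin

text \<open>
  Since E contains \<le> and the graphs of \<alpha> and \<beta>, every E-class C is closed under
  the order and under \<alpha> and \<beta>, and every relation contained in E is the union of
  its restrictions to the squares C \<times> C. Restriction to C \<times> C commutes with the
  Boolean operations and with converse, and with a composition R O S as soon as R \<subseteq> E,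
  because then R never leaves a class. All operations of Dq(E) are built from these, so
  sending R to the family of its restrictions R \<inter> C \<times> C is an isomorphism of Dq(E)
  onto the product of the full algebras Dq(C \<times> C). Conversely, the disjoint union of a
  family of full frames, with every element tagged by its index, is a frame whose
  equivalence is the union of the squares of the summands; tagging commutes with all the
  relational operations, so it maps the product of the full algebras isomorphically onto
  Dq of this union.
\<close>

lemma fgraph_iff [simp]: "(x, y) \<in> fgraph X f \<longleftrightarrow> x \<in> X \<and> y = f x"
  by (auto simp: fgraph_def)

lemma fgraph_relcomp: "f ` X \<subseteq> Y \<Longrightarrow> fgraph X f O fgraph Y g = fgraph X (g \<circ> f)"
  by (auto simp: fgraph_def)

lemma fgraph_eq_iff: "fgraph X f = fgraph X g \<longleftrightarrow> (\<forall>x\<in>X. f x = g x)"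
  by (auto simp: set_eq_iff)

lemma Id_on_eq_fgraph: "Id_on X = fgraph X id"
  by auto

lemma dq_frame_iff:
  "dq_frame X le E a b \<longleftrightarrow>
     partial_order_on X le \<and> equiv X E \<and> le \<subseteq> E \<and>
     order_automorphism X le a \<and> dual_order_automorphism X le b \<and>
     (\<forall>x\<in>X. (x, a x) \<in> E \<and> (x, b x) \<in> E \<and> b (b x) = x \<and> a (b (a x)) = b x)"
proof -
  have "fgraph X b O fgraph X b = Id_on X \<longleftrightarrow> (\<forall>x\<in>X. b (b x) = x)"
    and "fgraph X b = fgraph X a O fgraph X b O fgraph X a \<longleftrightarrow> (\<forall>x\<in>X. a (b (a x)) = b x)"
    if "a ` X \<subseteq> X" "b ` X \<subseteq> X"
    using that by (auto simp: fgraph_relcomp Id_on_eq_fgraph fgraph_eq_iff image_subset_iff)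
  then show ?thesis
    unfolding dq_frame_def order_automorphism_def dual_order_automorphism_def
    by (auto simp: bij_betw_def)
qed

lemma dq_prod_cong: "(\<And>i. i \<in> I \<Longrightarrow> F i = G i) \<Longrightarrow> dq_prod I F = dq_prod I G"
  unfolding dq_prod_def by (simp cong: restrict_cong PiE_cong)

section \<open>Decomposition of Dq(E) along the classes of E\<close>

lemma Restr_converse: "Restr (R\<inverse>) C = (Restr R C)\<inverse>"
  by auto

lemma Restr_fgraph: "C \<subseteq> X \<Longrightarrow> f ` C \<subseteq> C \<Longrightarrow> Restr (fgraph X f) C = fgraph C f"
  by auto

lemma class_rel_iff:
  assumes "equiv X E" "C \<in> X//E" "x \<in> C"
  shows "(x, y) \<in> E \<longleftrightarrow> y \<in> C"
  using in_quotient_imp_closed[OF assms] in_quotient_imp_in_rel[OF assms(1,2)] assms(3) by blast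

lemma Restr_class:
  assumes "equiv X E" "C \<in> X//E"
  shows "Restr E C = C \<times> C"
  using class_rel_iff[OF assms] by blast

lemma Restr_relcomp_class:
  assumes "equiv X E" "C \<in> X//E" "R \<subseteq> E"
  shows "Restr (R O S) C = Restr R C O Restr S C"
  using class_rel_iff[OF assms(1,2)] assms(3) by blast

lemma image_class_subset:
  assumes "equiv X E" "C \<in> X//E" "fgraph X f \<subseteq> E"
  shows "f ` C \<subseteq> C"
proof -
  have "f x \<in> C" if "x \<in> C" for x
  proof -
    have "x \<in> X" using that in_quotient_imp_subset[OF assms(1,2)] by blast
    then have "(x, f x) \<in> E" using assms(3) by auto
    then show ?thesis using class_rel_iff[OF assms(1,2) that] by simp
  qed
  then show ?thesis by blast
qed

lemma Restr_Union_classes: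
  assumes "equiv X E" "C \<in> X//E" "\<And>D. D \<in> X//E \<Longrightarrow> f D \<subseteq> D \<times> D"
  shows "Restr (\<Union>D\<in>X//E. f D) C = f C"
proof -
  have disjoint: "Restr (f D) C = {}" if "D \<in> X//E" "D \<noteq> C" for D
    using assms(3)[OF that(1)] quotient_disj[OF assms(1) that(1) assms(2)] that(2) by blast
  show ?thesis
  proof (intro equalityI subsetI)
    fix p assume "p \<in> Restr (\<Union>D\<in>X//E. f D) C"
    then obtain D where "D \<in> X//E" "p \<in> Restr (f D) C" by blast
    with disjoint show "p \<in> f C" by (cases "D = C") auto
  next
    fix p assume "p \<in> f C"
    then show "p \<in> Restr (\<Union>D\<in>X//E. f D) C" using assms(2,3) by blast
  qed
qed

lemma Union_Restr_classes:
  assumes "equiv X E" "R \<subseteq> E"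
  shows "(\<Union>C\<in>X//E. Restr R C) = R"
proof -
  have "(x, y) \<in> (\<Union>C\<in>X//E. Restr R C)" if "(x, y) \<in> R" for x y
  proof -
    have "x \<in> X" "(x, y) \<in> E" using that assms by (auto simp: equiv_def refl_on_def)
    then have "E `` {x} \<in> X//E" "x \<in> E `` {x}" "y \<in> E `` {x}"
      using equiv_class_self[OF assms(1)] by (auto intro: quotientI)
    then show ?thesis using that by blast
  qed
  then show ?thesis by auto
qed

lemma Restr_class_up_set:
  assumes "equiv X E" "C \<in> X//E" "R \<in> up_sets le E"
  shows "Restr R C \<in> up_sets (Restr le C) (C \<times> C)"
  using assms Restr_class[OF assms(1,2)] unfolding up_sets_def E_below_def by blast

lemma Union_class_up_sets:
  assumes "equiv X E" "le \<subseteq> E" "f \<in> (\<Pi> C\<in>X//E. up_sets (Restr le C) (C \<times> C))"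
  shows "(\<Union>C\<in>X//E. f C) \<in> up_sets le E"
  unfolding up_sets_def
proof (intro CollectI conjI ballI impI)
  show "(\<Union>C\<in>X//E. f C) \<subseteq> E"
    using assms(1,3) Restr_class by (fastforce simp: up_sets_def)
  fix p q assume "p \<in> (\<Union>C\<in>X//E. f C)" and "q \<in> E" and below: "E_below le p q"
  then obtain C where C: "C \<in> X//E" "p \<in> f C" and up: "f C \<in> up_sets (Restr le C) (C \<times> C)"
    using assms(3) by blast
  then have p: "p \<in> C \<times> C" by (auto simp: up_sets_def)
  have "(fst p, fst q) \<in> E" "(snd p, snd q) \<in> E"
    using below assms(1,2) by (auto simp: E_below_def equiv_def sym_def)
  then have "q \<in> C \<times> C"
    using p class_rel_iff[OF assms(1) C(1)] by (auto simp: mem_Times_iff)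
  moreover from this below p have "E_below (Restr le C) p q"
    by (auto simp: E_below_def mem_Times_iff)
  ultimately have "q \<in> f C"
    using up C(2) unfolding up_sets_def by blast
  then show "q \<in> (\<Union>C\<in>X//E. f C)" using C(1) by blast
qed

definition Restr_classes :: "'a set \<Rightarrow> 'a rel \<Rightarrow> 'a rel \<Rightarrow> 'a set \<Rightarrow> 'a rel" where
  "Restr_classes X E R = (\<lambda>C\<in>X//E. Restr R C)"

lemma bij_betw_Restr_classes:
  assumes "equiv X E" "le \<subseteq> E"
  shows "bij_betw (Restr_classes X E) (up_sets le E) (\<Pi>\<^sub>E C\<in>X//E. up_sets (Restr le C) (C \<times> C))"
proof (rule bij_betw_byWitness[where f' = "\<lambda>f. \<Union>C\<in>X//E. f C"])
  show "\<forall>R\<in>up_sets le E. (\<Union>C\<in>X//E. Restr_classes X E R C) = R"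
  proof
    fix R assume "R \<in> up_sets le E"
    then have "(\<Union>C\<in>X//E. Restr R C) = R"
      using Union_Restr_classes[OF assms(1)] by (simp add: up_sets_def)
    then show "(\<Union>C\<in>X//E. Restr_classes X E R C) = R"
      by (simp add: Restr_classes_def)
  qed
  show "\<forall>f\<in>\<Pi>\<^sub>E C\<in>X//E. up_sets (Restr le C) (C \<times> C).
      Restr_classes X E (\<Union>C\<in>X//E. f C) = f"
  proof
    fix f assume f: "f \<in> (\<Pi>\<^sub>E C\<in>X//E. up_sets (Restr le C) (C \<times> C))"
    then have "f C \<subseteq> C \<times> C" if "C \<in> X//E" for C
      using that by (auto simp: up_sets_def)
    then have "Restr_classes X E (\<Union>C\<in>X//E. f C) = restrict f (X//E)"
      unfolding Restr_classes_def using Restr_Union_classes[OF assms(1)] by (simp cong: restrict_cong)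
    then show "Restr_classes X E (\<Union>C\<in>X//E. f C) = f"
      using f by (simp add: PiE_restrict)
  qed
  show "Restr_classes X E ` up_sets le E \<subseteq> (\<Pi>\<^sub>E C\<in>X//E. up_sets (Restr le C) (C \<times> C))"
    by (rule image_subsetI) (simp add: Restr_classes_def Restr_class_up_set[OF assms(1)])
  show "(\<lambda>f. \<Union>C\<in>X//E. f C) ` (\<Pi>\<^sub>E C\<in>X//E. up_sets (Restr le C) (C \<times> C))
      \<subseteq> up_sets le E"
    using Union_class_up_sets[OF assms] by blast
qed

lemma Restr_Dq_zero_class:
  assumes "equiv X E" "C \<in> X//E" "fgraph X a \<subseteq> E"
  shows "Restr (Dq_zero X le E a) C = Dq_zero C (Restr le C) (C \<times> C) a"
  using assms
  by (simp add: Dq_zero_def Restr_relcomp_class Restr_converse Diff_Int_distrib2 Restr_class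
      Restr_fgraph image_class_subset in_quotient_imp_subset)

lemma dq_iso_Dq_prod_classes:
  assumes E: "equiv X E" and le: "le \<subseteq> E" and a: "fgraph X a \<subseteq> E" and b: "fgraph X b \<subseteq> E"
  shows "dq_iso (Dq X le E a b) (dq_prod (X//E) (\<lambda>C. Dq C (Restr le C) (C \<times> C) a b))
    (Restr_classes X E)"
  unfolding dq_iso_def
proof (intro conjI ballI)
  let ?D = "Dq X le E a b" and ?P = "dq_prod (X//E) (\<lambda>C. Dq C (Restr le C) (C \<times> C) a b)"
    and ?h = "Restr_classes X E"
  show "bij_betw ?h (carrier ?D) (carrier ?P)"
    using bij_betw_Restr_classes[OF E le] by (simp add: Dq_def dq_prod_def)
  show "?h (one ?D) = one ?P" "?h (zero ?D) = zero ?P"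
    using E a by (simp_all add: Dq_def dq_prod_def Restr_classes_def Restr_Dq_zero_class
        cong: restrict_cong)
  fix R S assume "R \<in> carrier ?D" "S \<in> carrier ?D"
  \<comment> \<open>\<open>R\<inverse> \<subseteq> E\<close> lets restriction pass through the composition in \<open>tilde\<close>\<close>
  then have R: "R \<subseteq> E" "R\<inverse> \<subseteq> E"
    using E by (auto simp: Dq_def up_sets_def equiv_def sym_def)
  show "?h (meet ?D R S) = meet ?P (?h R) (?h S)" "?h (join ?D R S) = join ?P (?h R) (?h S)"
    by (auto simp: Dq_def dq_prod_def Restr_classes_def intro!: restrict_ext)
  show "?h (comp ?D R S) = comp ?P (?h R) (?h S)" "?h (tilde ?D R) = tilde ?P (?h R)"
    "?h (minus ?D R) = minus ?P (?h R)" "?h (prime ?D R) = prime ?P (?h R)"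
    using E R a b
    by (simp_all add: Dq_def dq_prod_def Restr_classes_def Diff_Int_distrib2 Restr_converse
        Restr_relcomp_class Restr_class Restr_Dq_zero_class Restr_fgraph image_class_subset
        in_quotient_imp_subset cong: restrict_cong)
qed

lemma bij_betw_invariant_subset:
  assumes "bij_betw f X X" "Y \<subseteq> X" "\<And>x. x \<in> X \<Longrightarrow> f x \<in> Y \<longleftrightarrow> x \<in> Y"
  shows "bij_betw f Y Y"
proof (rule bij_betw_subset[OF assms(1,2)])
  show "f ` Y = Y"
  proof (intro equalityI subsetI)
    fix y assume "y \<in> Y"
    then obtain x where "x \<in> X" "y = f x"
      using assms(1,2) by (metis bij_betw_imp_surj_on imageE subsetD)
    with \<open>y \<in> Y\<close> assms(3) show "y \<in> f ` Y" by blast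
  qed (use assms(2,3) in blast)
qed

lemma partial_order_on_Restr:
  "partial_order_on X r \<Longrightarrow> Y \<subseteq> X \<Longrightarrow> partial_order_on Y (Restr r Y)"
  by (auto simp: partial_order_on_def preorder_on_def refl_on_def trans_def antisym_def)

lemma equiv_Restr:
  assumes "equiv X E" "Y \<subseteq> X"
  shows "equiv Y (Restr E Y)"
proof (rule equivI)
  show "Restr E Y \<subseteq> Y \<times> Y" by blast
  show "refl_on Y (Restr E Y)"
    using assms by (auto simp: equiv_def refl_on_def)
  show "sym (Restr E Y)"
    using assms(1) unfolding equiv_def sym_def by blast
  show "trans (Restr E Y)"
    using assms(1) trans_Restr by (blast elim: equivE)
qed

lemma order_automorphism_Restr:
  assumes "order_automorphism X le a" "Y \<subseteq> X" "\<And>x. x \<in> X \<Longrightarrow> a x \<in> Y \<longleftrightarrow> x \<in> Y"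
  shows "order_automorphism Y (Restr le Y) a"
  unfolding order_automorphism_def
proof
  show "bij_betw a Y Y"
    using bij_betw_invariant_subset[OF _ assms(2,3)] assms(1) by (simp add: order_automorphism_def)
  show "\<forall>x\<in>Y. \<forall>y\<in>Y. (x, y) \<in> Restr le Y \<longleftrightarrow> (a x, a y) \<in> Restr le Y"
    using assms unfolding order_automorphism_def by blast
qed

lemma dual_order_automorphism_Restr:
  assumes "dual_order_automorphism X le b" "Y \<subseteq> X" "\<And>x. x \<in> X \<Longrightarrow> b x \<in> Y \<longleftrightarrow> x \<in> Y"
  shows "dual_order_automorphism Y (Restr le Y) b"
  unfolding dual_order_automorphism_def
proof
  show "bij_betw b Y Y"
    using bij_betw_invariant_subset[OF _ assms(2,3)] assms(1)
    by (simp add: dual_order_automorphism_def)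
  show "\<forall>x\<in>Y. \<forall>y\<in>Y. (x, y) \<in> Restr le Y \<longleftrightarrow> (b y, b x) \<in> Restr le Y"
    using assms unfolding dual_order_automorphism_def by blast
qed

lemma dq_frame_Restr:
  assumes frame: "dq_frame X le E a b" and "Y \<subseteq> X" and closed: "E `` Y \<subseteq> Y"
  shows "dq_frame Y (Restr le Y) (Restr E Y) a b"
proof -
  have po: "partial_order_on X le" and eq: "equiv X E" and "le \<subseteq> E"
    and a: "order_automorphism X le a" and b: "dual_order_automorphism X le b"
    and pointwise: "\<forall>x\<in>X. (x, a x) \<in> E \<and> (x, b x) \<in> E \<and> b (b x) = x \<and> a (b (a x)) = b x"
    using frame by (simp_all add: dq_frame_iff)
  have invariant: "f x \<in> Y \<longleftrightarrow> x \<in> Y" if "(x, f x) \<in> E" for f x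
  proof -
    have "(f x, x) \<in> E" using that eq by (auto simp: equiv_def sym_def)
    then show ?thesis using that closed by blast
  qed
  then have a_Y: "a x \<in> Y \<longleftrightarrow> x \<in> Y" and b_Y: "b x \<in> Y \<longleftrightarrow> x \<in> Y" if "x \<in> X" for x
    using pointwise that by blast+
  note partial_order_on_Restr[OF po \<open>Y \<subseteq> X\<close>] equiv_Restr[OF eq \<open>Y \<subseteq> X\<close>]
    order_automorphism_Restr[OF a \<open>Y \<subseteq> X\<close> a_Y]
    dual_order_automorphism_Restr[OF b \<open>Y \<subseteq> X\<close> b_Y]
  moreover have "Restr le Y \<subseteq> Restr E Y"
    using \<open>le \<subseteq> E\<close> by blast
  moreover have "\<forall>x\<in>Y. (x, a x) \<in> Restr E Y \<and> (x, b x) \<in> Restr E Y \<and>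
      b (b x) = x \<and> a (b (a x)) = b x"
    using pointwise a_Y b_Y \<open>Y \<subseteq> X\<close> by blast
  ultimately show ?thesis
    unfolding dq_frame_iff by (intro conjI)
qed

lemma dq_frame_class:
  assumes "dq_frame X le E a b" "C \<in> X//E"
  shows "dq_frame C (Restr le C) (C \<times> C) a b"
proof -
  have eq: "equiv X E" using assms(1) by (simp add: dq_frame_iff)
  have "C \<subseteq> X" "E `` C \<subseteq> C"
    using in_quotient_imp_subset[OF eq assms(2)] class_rel_iff[OF eq assms(2)] by auto
  from dq_frame_Restr[OF assms(1) this] show ?thesis
    unfolding Restr_class[OF eq assms(2)] .
qed

theorem EDqRA_isomorphic_prod_FDqRA:
  fixes A :: "'a rel dq_alg"
  assumes "EDqRA A"
  shows "\<exists>(I :: 'a set set) (F :: 'a set \<Rightarrow> 'a rel dq_alg).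
    (\<forall>i\<in>I. FDqRA (F i)) \<and> dq_isomorphic A (dq_prod I F)"
proof -
  obtain X le E a b where frame: "dq_frame X le E a b" and A: "A = Dq X le E a b"
    using assms by (auto simp: EDqRA_def)
  then have "equiv X E" "le \<subseteq> E" "fgraph X a \<subseteq> E" "fgraph X b \<subseteq> E"
    by (simp_all add: dq_frame_def)
  from dq_iso_Dq_prod_classes[OF this] have iso:
    "dq_isomorphic A (dq_prod (X//E) (\<lambda>C. Dq C (Restr le C) (C \<times> C) a b))"
    unfolding A dq_isomorphic_def by blast
  show ?thesis
  proof (intro exI conjI)
    show "\<forall>C\<in>X//E. FDqRA (Dq C (Restr le C) (C \<times> C) a b)"
      using dq_frame_class[OF frame] unfolding FDqRA_def by blast
  qed (fact iso)
qed

section \<open>Disjoint sums of frames\<close>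

definition sum_rel :: "'i set \<Rightarrow> ('i \<Rightarrow> 'a rel) \<Rightarrow> ('i \<times> 'a) rel" where
  "sum_rel I R = {((i, x), (i, y)) | i x y. i \<in> I \<and> (x, y) \<in> R i}"

definition sum_fun :: "('i \<Rightarrow> 'a \<Rightarrow> 'a) \<Rightarrow> 'i \<times> 'a \<Rightarrow> 'i \<times> 'a" where
  "sum_fun f = (\<lambda>(i, x). (i, f i x))"

lemma sum_rel_iff [simp]: "((i, x), (j, y)) \<in> sum_rel I R \<longleftrightarrow> i = j \<and> i \<in> I \<and> (x, y) \<in> R i"
  by (auto simp: sum_rel_def)

lemma sum_fun_apply [simp]: "sum_fun f (i, x) = (i, f i x)"
  by (simp add: sum_fun_def)

lemma sum_rel_subset_iff: "sum_rel I R \<subseteq> sum_rel I S \<longleftrightarrow> (\<forall>i\<in>I. R i \<subseteq> S i)"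
proof
  assume sub: "sum_rel I R \<subseteq> sum_rel I S"
  show "\<forall>i\<in>I. R i \<subseteq> S i"
  proof (intro ballI subsetI)
    fix i p assume "i \<in> I" "p \<in> R i"
    then have "((i, fst p), (i, snd p)) \<in> sum_rel I R" by simp
    with sub have "((i, fst p), (i, snd p)) \<in> sum_rel I S" by (rule subsetD)
    then show "p \<in> S i" by simp
  qed
qed (unfold sum_rel_def, blast)

lemma sum_rel_eq_iff: "sum_rel I R = sum_rel I S \<longleftrightarrow> (\<forall>i\<in>I. R i = S i)"
  by (auto simp: set_eq_subset sum_rel_subset_iff)

lemma sum_rel_restrict [simp]: "sum_rel I (restrict R I) = sum_rel I R"
  by (simp add: sum_rel_eq_iff)

lemma sum_rel_Int: "sum_rel I R \<inter> sum_rel I S = sum_rel I (\<lambda>i. R i \<inter> S i)"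
  by (auto simp: sum_rel_def)

lemma sum_rel_Un: "sum_rel I R \<union> sum_rel I S = sum_rel I (\<lambda>i. R i \<union> S i)"
  by (auto simp: sum_rel_def)

lemma sum_rel_Diff: "sum_rel I R - sum_rel I S = sum_rel I (\<lambda>i. R i - S i)"
  by (auto simp: sum_rel_def)

lemma sum_rel_converse: "(sum_rel I R)\<inverse> = sum_rel I (\<lambda>i. (R i)\<inverse>)"
  by (auto simp: sum_rel_def)

lemma sum_rel_relcomp: "sum_rel I R O sum_rel I S = sum_rel I (\<lambda>i. R i O S i)"
  by (auto simp: sum_rel_def)

lemma fgraph_sum_fun: "fgraph (Sigma I X) (sum_fun f) = sum_rel I (\<lambda>i. fgraph (X i) (f i))"
  by (auto simp: sum_rel_def fgraph_def)

lemma sum_rel_fibres: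
  assumes "R \<subseteq> sum_rel I S"
  shows "R = sum_rel I (\<lambda>i. {(x, y). ((i, x), (i, y)) \<in> R})"
  using assms by (auto simp: sum_rel_def)

lemma sum_rel_up_sets_iff:
  "sum_rel I R \<in> up_sets (sum_rel I le) (sum_rel I E) \<longleftrightarrow> (\<forall>i\<in>I. R i \<in> up_sets (le i) (E i))"
proof
  assume up: "sum_rel I R \<in> up_sets (sum_rel I le) (sum_rel I E)"
  show "\<forall>i\<in>I. R i \<in> up_sets (le i) (E i)"
  proof
    fix i assume i: "i \<in> I"
    have "R i \<subseteq> E i" using up i by (simp add: up_sets_def sum_rel_subset_iff)
    moreover have "q \<in> R i" if "p \<in> R i" "q \<in> E i" "E_below (le i) p q" for p q
    proof -
      let ?lift = "\<lambda>p. ((i, fst p), (i, snd p))"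
      have "?lift p \<in> sum_rel I R" "?lift q \<in> sum_rel I E"
        "E_below (sum_rel I le) (?lift p) (?lift q)"
        using that i by (auto simp: E_below_def)
      then have "?lift q \<in> sum_rel I R" using up unfolding up_sets_def by blast
      then show ?thesis by simp
    qed
    ultimately show "R i \<in> up_sets (le i) (E i)" unfolding up_sets_def by blast
  qed
next
  assume up: "\<forall>i\<in>I. R i \<in> up_sets (le i) (E i)"
  show "sum_rel I R \<in> up_sets (sum_rel I le) (sum_rel I E)"
    unfolding up_sets_def
  proof (intro CollectI conjI ballI impI)
    show "sum_rel I R \<subseteq> sum_rel I E" using up by (simp add: up_sets_def sum_rel_subset_iff)
    fix P Q assume "P \<in> sum_rel I R" "Q \<in> sum_rel I E" and below: "E_below (sum_rel I le) P Q"
    then obtain i x y j u v where P: "P = ((i, x), (i, y))" "i \<in> I" "(x, y) \<in> R i"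
      and Q: "Q = ((j, u), (j, v))" "(u, v) \<in> E j"
      by (auto simp: sum_rel_def)
    have "(fst Q, fst P) \<in> sum_rel I le" "(snd P, snd Q) \<in> sum_rel I le"
      using below by (simp_all add: E_below_def)
    then have "j = i" "E_below (le i) (x, y) (u, v)" by (auto simp: P(1) Q(1) E_below_def)
    with up P Q have "(u, v) \<in> R i" unfolding up_sets_def by blast
    then show "Q \<in> sum_rel I R" using P Q \<open>j = i\<close> by simp
  qed
qed

lemma bij_betw_sum_rel_up_sets:
  "bij_betw (sum_rel I) (\<Pi>\<^sub>E i\<in>I. up_sets (le i) (E i)) (up_sets (sum_rel I le) (sum_rel I E))"
  unfolding bij_betw_def
proof
  show "inj_on (sum_rel I) (\<Pi>\<^sub>E i\<in>I. up_sets (le i) (E i))"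
    unfolding inj_on_def sum_rel_eq_iff by (blast intro: PiE_ext)
  show "sum_rel I ` (\<Pi>\<^sub>E i\<in>I. up_sets (le i) (E i)) = up_sets (sum_rel I le) (sum_rel I E)"
  proof (intro equalityI subsetI)
    fix R assume "R \<in> sum_rel I ` (\<Pi>\<^sub>E i\<in>I. up_sets (le i) (E i))"
    then show "R \<in> up_sets (sum_rel I le) (sum_rel I E)"
      using sum_rel_up_sets_iff by blast
  next
    fix R assume R: "R \<in> up_sets (sum_rel I le) (sum_rel I E)"
    define fibres where "fibres = (\<lambda>i\<in>I. {(x, y). ((i, x), (i, y)) \<in> R})"
    have "R \<subseteq> sum_rel I E" using R by (simp add: up_sets_def)
    then have "R = sum_rel I (\<lambda>i. {(x, y). ((i, x), (i, y)) \<in> R})" by (rule sum_rel_fibres)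
    also have "\<dots> = sum_rel I fibres" by (simp add: fibres_def)
    finally have R_eq: "R = sum_rel I fibres" .
    with R have "\<forall>i\<in>I. fibres i \<in> up_sets (le i) (E i)"
      by (simp add: sum_rel_up_sets_iff)
    then have "fibres \<in> (\<Pi>\<^sub>E i\<in>I. up_sets (le i) (E i))"
      by (simp add: PiE_iff fibres_def)
    with R_eq show "R \<in> sum_rel I ` (\<Pi>\<^sub>E i\<in>I. up_sets (le i) (E i))" by blast
  qed
qed

lemma Dq_zero_sum:
  "Dq_zero (Sigma I X) (sum_rel I le) (sum_rel I E) (sum_fun a) =
     sum_rel I (\<lambda>i. Dq_zero (X i) (le i) (E i) (a i))"
  by (simp add: Dq_zero_def fgraph_sum_fun sum_rel_Diff sum_rel_converse sum_rel_relcomp)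

lemma dq_iso_prod_Dq_sum:
  "dq_iso (dq_prod I (\<lambda>i. Dq (X i) (le i) (E i) (a i) (b i)))
     (Dq (Sigma I X) (sum_rel I le) (sum_rel I E) (sum_fun a) (sum_fun b)) (sum_rel I)"
  using bij_betw_sum_rel_up_sets[of I le E] unfolding dq_iso_def
  by (simp add: Dq_def dq_prod_def Dq_zero_sum fgraph_sum_fun sum_rel_Int sum_rel_Un sum_rel_Diff
      sum_rel_converse sum_rel_relcomp)

lemma sum_rel_subset_Sigma:
  "\<forall>i\<in>I. R i \<subseteq> X i \<times> X i \<Longrightarrow> sum_rel I R \<subseteq> Sigma I X \<times> Sigma I X"
  by (auto simp: sum_rel_def)

lemma refl_on_sum_rel: "\<forall>i\<in>I. refl_on (X i) (R i) \<Longrightarrow> refl_on (Sigma I X) (sum_rel I R)"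
  by (auto simp: refl_on_def)

lemma sym_sum_rel: "\<forall>i\<in>I. sym (R i) \<Longrightarrow> sym (sum_rel I R)"
  unfolding sym_def sum_rel_def by blast

lemma trans_sum_rel: "\<forall>i\<in>I. trans (R i) \<Longrightarrow> trans (sum_rel I R)"
  unfolding trans_def sum_rel_def by blast

lemma antisym_sum_rel: "\<forall>i\<in>I. antisym (R i) \<Longrightarrow> antisym (sum_rel I R)"
  unfolding antisym_def sum_rel_def by blast

lemma partial_order_on_sum_rel:
  "\<forall>i\<in>I. partial_order_on (X i) (R i) \<Longrightarrow> partial_order_on (Sigma I X) (sum_rel I R)"
  by (simp add: partial_order_on_def preorder_on_def ball_conj_distrib sum_rel_subset_Sigma
      refl_on_sum_rel trans_sum_rel antisym_sum_rel)

lemma equiv_sum_rel: "\<forall>i\<in>I. equiv (X i) (R i) \<Longrightarrow> equiv (Sigma I X) (sum_rel I R)"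
  by (simp add: equiv_def ball_conj_distrib sum_rel_subset_Sigma refl_on_sum_rel sym_sum_rel
      trans_sum_rel)

lemma bij_betw_sum_fun:
  assumes "\<forall>i\<in>I. bij_betw (f i) (X i) (X i)"
  shows "bij_betw (sum_fun f) (Sigma I X) (Sigma I X)"
proof (rule bij_betw_byWitness[where f' = "sum_fun (\<lambda>i. inv_into (X i) (f i))"])
  have inj: "inj_on (f i) (X i)" and onto: "f i ` X i = X i" if "i \<in> I" for i
    using assms that by (simp_all add: bij_betw_def)
  show "\<forall>p\<in>Sigma I X. sum_fun (\<lambda>i. inv_into (X i) (f i)) (sum_fun f p) = p"
    using inj by auto
  show "\<forall>p\<in>Sigma I X. sum_fun f (sum_fun (\<lambda>i. inv_into (X i) (f i)) p) = p"
    using onto by (auto simp: f_inv_into_f)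
  have "f i x \<in> X i" if "i \<in> I" "x \<in> X i" for i x
    using bij_betw_apply[OF bspec[OF assms that(1)] that(2)] .
  then show "sum_fun f ` Sigma I X \<subseteq> Sigma I X" by auto
  have "inv_into (X i) (f i) x \<in> X i" if "i \<in> I" "x \<in> X i" for i x
    using inv_into_into[of x "f i" "X i"] onto[OF that(1)] that(2) by simp
  then show "sum_fun (\<lambda>i. inv_into (X i) (f i)) ` Sigma I X \<subseteq> Sigma I X" by auto
qed

lemma order_automorphism_sum_fun:
  assumes "\<forall>i\<in>I. order_automorphism (X i) (le i) (a i)"
  shows "order_automorphism (Sigma I X) (sum_rel I le) (sum_fun a)"
  using assms bij_betw_sum_fun[of I a X] by (auto simp: order_automorphism_def)

lemma dual_order_automorphism_sum_fun:
  assumes "\<forall>i\<in>I. dual_order_automorphism (X i) (le i) (b i)"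
  shows "dual_order_automorphism (Sigma I X) (sum_rel I le) (sum_fun b)"
  using assms bij_betw_sum_fun[of I b X] by (auto simp: dual_order_automorphism_def)

lemma dq_frame_sum:
  assumes "\<forall>i\<in>I. dq_frame (X i) (le i) (E i) (a i) (b i)"
  shows "dq_frame (Sigma I X) (sum_rel I le) (sum_rel I E) (sum_fun a) (sum_fun b)"
  using assms unfolding dq_frame_iff
  by (auto simp: ball_conj_distrib partial_order_on_sum_rel equiv_sum_rel sum_rel_subset_iff
      order_automorphism_sum_fun dual_order_automorphism_sum_fun)

theorem prod_FDqRA_isomorphic_EDqRA:
  fixes F :: "'i \<Rightarrow> 'a rel dq_alg"
  assumes "\<forall>i\<in>I. FDqRA (F i)"
  shows "\<exists>B :: ('i \<times> 'a) rel dq_alg. EDqRA B \<and> dq_isomorphic (dq_prod I F) B"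
proof -
  obtain X le a b where frames: "\<forall>i\<in>I. dq_frame (X i) (le i) (X i \<times> X i) (a i) (b i)"
    and F: "\<forall>i\<in>I. F i = Dq (X i) (le i) (X i \<times> X i) (a i) (b i)"
    using assms unfolding FDqRA_def by (auto dest!: bchoice) blast
  have prod_eq: "dq_prod I F = dq_prod I (\<lambda>i. Dq (X i) (le i) (X i \<times> X i) (a i) (b i))"
    using F by (intro dq_prod_cong) simp
  define B where
    "B = Dq (Sigma I X) (sum_rel I le) (sum_rel I (\<lambda>i. X i \<times> X i)) (sum_fun a) (sum_fun b)"
  have "EDqRA B"
    using dq_frame_sum[OF frames] unfolding EDqRA_def B_def by blast
  moreover have "dq_isomorphic (dq_prod I F) B"
    unfolding prod_eq dq_isomorphic_def B_def by (rule exI, rule dq_iso_prod_Dq_sum)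
  ultimately show ?thesis by blast
qed

theorem theorem4p4:
  shows "(\<forall>A :: 'a rel dq_alg. EDqRA A \<longrightarrow>
            (\<exists>(I :: 'a set set) (F :: 'a set \<Rightarrow> 'a rel dq_alg).
               (\<forall>i\<in>I. FDqRA (F i)) \<and> dq_isomorphic A (dq_prod I F)))
       \<and> (\<forall>(I :: 'i set) (F :: 'i \<Rightarrow> 'a rel dq_alg). (\<forall>i\<in>I. FDqRA (F i)) \<longrightarrow>
            (\<exists>B :: ('i \<times> 'a) rel dq_alg. EDqRA B \<and> dq_isomorphic (dq_prod I F) B))"
  using EDqRA_isomorphic_prod_FDqRA prod_FDqRA_isomorphic_EDqRA by blast

end
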